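(* Let $w\in\mathbb{Q}^{V_+}_{\ge0}$, $b\in\mathbb{Z}^{V_+}_{\ge0}$, $\xi\in[N]$, and let $S=\{v_1,\dots,v_\ell\}\subseteq V_+$ be nonempty with $w_{v_1}\le\dots\le w_{v_\ell}$. Let $k'\in\mathbb{Z}_{>0}$ satisfy $k_\xi(S)-k'\le b(S)$, and let $j\in[\ell]$ be the smallest index with $k_\xi(S)-k'\le\sum_{i\in[j]}b_{v_i}$. Set $\bar\alpha_S=\mathbb{I}(k_\xi(S)>k')\,w_{v_j}$ and $\bar\beta_v=\mathbb{I}(v\in\{v_1,\dots,v_{j-1}\})(w_v-w_{v_j})$ for all $v\in V_+$. Then $(\bar\alpha_S,\bar\beta)$ is an optimal solution of the dual linear program $$\max\Big\{\alpha_S(k_\xi(S)-k')+\sum_{v\in V_+}\beta_vb_v:\ \alpha_S+\beta_v\le w_v\ (v\in S),\ \beta_v\le w_v\ (v\in V_+\setminus S),\ \alpha_S\ge0,\ \beta\le0\Big\}$$ of $\mathcal{L}^*_\xi(S,k')=\min\{\sum_{v\in V_+}w_vy_v:\ y(S)\ge k_\xi(S)-k',\ y_v\le b_v\ \forall v\in V_+,\ y\ge0\}$, and $\bar\alpha_S\le\mathcal{L}^*_\xi(S,k')$.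
   Context: $V_+$ is a finite set of customers; $C>0$ is the capacity; $d^\xi\in\mathbb{Q}^{V_+}_{\ge0}$ is the demand vector of scenario $\xi$; $f(S)=\sum_{i\in S}f(i)$; $k_\xi(S)=\lceil d^\xi(S)/C\rceil$; $[j]=\{1,\dots,j\}$ (empty if $j\le 0$); $\mathbb{I}$ is the indicator function. *)

theory Defs
  imports Main "HOL.Real"
begin

definition kxi :: "rat \<Rightarrow> (nat \<Rightarrow> 'a \<Rightarrow> rat) \<Rightarrow> nat \<Rightarrow> 'a set \<Rightarrow> int" where
  "kxi C d xi S = \<lceil>(\<Sum>i\<in>S. d xi i) / C\<rceil>"

definition primal_feasible ::
  "'a set \<Rightarrow> int \<Rightarrow> ('a \<Rightarrow> int) \<Rightarrow> 'a set \<Rightarrow> ('a \<Rightarrow> real) \<Rightarrow> bool" where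
  "primal_feasible V rhs b S y \<longleftrightarrow>
     (\<Sum>v\<in>S. y v) \<ge> real_of_int rhs \<and>
     (\<forall>v\<in>V. y v \<le> real_of_int (b v) \<and> 0 \<le> y v)"

definition primal_value ::
  "'a set \<Rightarrow> ('a \<Rightarrow> rat) \<Rightarrow> int \<Rightarrow> ('a \<Rightarrow> int) \<Rightarrow> 'a set \<Rightarrow> real" where
  "primal_value V w rhs b S =
     Inf {(\<Sum>v\<in>V. real_of_rat (w v) * y v) | y. primal_feasible V rhs b S y}"

definition dual_feasible ::
  "'a set \<Rightarrow> ('a \<Rightarrow> rat) \<Rightarrow> 'a set \<Rightarrow> real \<Rightarrow> ('a \<Rightarrow> real) \<Rightarrow> bool" where
  "dual_feasible V w S \<alpha> \<beta> \<longleftrightarrow>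
     (\<forall>v\<in>S. \<alpha> + \<beta> v \<le> real_of_rat (w v)) \<and>
     (\<forall>v\<in>V - S. \<beta> v \<le> real_of_rat (w v)) \<and>
     0 \<le> \<alpha> \<and> (\<forall>v\<in>V. \<beta> v \<le> 0)"

definition dual_obj ::
  "'a set \<Rightarrow> int \<Rightarrow> ('a \<Rightarrow> int) \<Rightarrow> real \<Rightarrow> ('a \<Rightarrow> real) \<Rightarrow> real" where
  "dual_obj V rhs b \<alpha> \<beta> = \<alpha> * real_of_int rhs + (\<Sum>v\<in>V. \<beta> v * real_of_int (b v))"

definition dual_optimal ::
  "'a set \<Rightarrow> ('a \<Rightarrow> rat) \<Rightarrow> int \<Rightarrow> ('a \<Rightarrow> int) \<Rightarrow> 'a set \<Rightarrow> real \<Rightarrow> ('a \<Rightarrow> real) \<Rightarrow> bool" where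
  "dual_optimal V w rhs b S \<alpha> \<beta> \<longleftrightarrow>
     dual_feasible V w S \<alpha> \<beta> \<and>
     (\<forall>\<alpha>' \<beta>'. dual_feasible V w S \<alpha>' \<beta>' \<longrightarrow>
        dual_obj V rhs b \<alpha>' \<beta>' \<le> dual_obj V rhs b \<alpha> \<beta>)"

end

theory Submission
  imports Defs
begin

text \<open>The dual pair is certified by a primal solution of the same cost: buy the customers
  \<open>v\<^sub>1, \<dots>, v\<^bsub>j-1\<^esub>\<close>, which are cheaper than the pivot \<open>v\<^sub>j\<close>, up to their bounds and cover
  the residual demand at \<open>v\<^sub>j\<close>. Complementary slackness holds by construction, so weak duality
  makes both solutions optimal. Minimality of \<open>j\<close> means that at least one unit is bought at the
  price \<open>w\<^bsub>v\<^sub>j\<^esub>\<close>, and all other terms of the common value are nonnegative, whence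
  \<open>\<alpha> \<le> \<L>\<^sup>*\<close>.\<close>

definition primal_cost :: "'a set \<Rightarrow> ('a \<Rightarrow> rat) \<Rightarrow> ('a \<Rightarrow> real) \<Rightarrow> real" where
  "primal_cost V w y = (\<Sum>v\<in>V. real_of_rat (w v) * y v)"

lemma weak_duality:
  assumes "finite V" "S \<subseteq> V" "dual_feasible V w S \<alpha> \<beta>" "primal_feasible V r b S y"
  shows "dual_obj V r b \<alpha> \<beta> \<le> primal_cost V w y"
proof -
  have dual: "\<forall>v\<in>S. \<alpha> + \<beta> v \<le> real_of_rat (w v)" "\<forall>v\<in>V - S. \<beta> v \<le> real_of_rat (w v)"
    "0 \<le> \<alpha>" "\<forall>v\<in>V. \<beta> v \<le> 0"
    using assms(3) unfolding dual_feasible_def by auto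
  have primal: "real_of_int r \<le> (\<Sum>v\<in>S. y v)" "\<forall>v\<in>V. y v \<le> real_of_int (b v) \<and> 0 \<le> y v"
    using assms(4) unfolding primal_feasible_def by auto
  have "dual_obj V r b \<alpha> \<beta> \<le> (\<Sum>v\<in>S. \<alpha> * y v) + (\<Sum>v\<in>V. \<beta> v * y v)"
  proof -
    have "\<alpha> * real_of_int r \<le> (\<Sum>v\<in>S. \<alpha> * y v)"
      using primal(1) dual(3) by (simp add: sum_distrib_left[symmetric] mult_left_mono)
    moreover have "(\<Sum>v\<in>V. \<beta> v * real_of_int (b v)) \<le> (\<Sum>v\<in>V. \<beta> v * y v)"
      using dual(4) primal(2) by (intro sum_mono) (auto intro: mult_left_mono_neg)
    ultimately show ?thesis unfolding dual_obj_def by linarith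
  qed
  also have "\<dots> = (\<Sum>v\<in>S. (\<alpha> + \<beta> v) * y v) + (\<Sum>v\<in>V - S. \<beta> v * y v)"
    using sum.subset_diff[OF assms(2,1), of "\<lambda>v. \<beta> v * y v"]
    by (simp add: distrib_right sum.distrib)
  also have "\<dots> \<le> (\<Sum>v\<in>S. real_of_rat (w v) * y v) + (\<Sum>v\<in>V - S. real_of_rat (w v) * y v)"
    using dual(1,2) primal(2) assms(2)
    by (intro add_mono sum_mono) (auto intro!: mult_right_mono)
  also have "\<dots> = primal_cost V w y"
    unfolding primal_cost_def
    using sum.subset_diff[OF assms(2,1), of "\<lambda>v. real_of_rat (w v) * y v"] by simp
  finally show ?thesis .
qed

lemma dual_optimal_by_certificate:
  assumes "finite V" "S \<subseteq> V" "dual_feasible V w S \<alpha> \<beta>" "primal_feasible V r b S y"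
    and "primal_cost V w y = dual_obj V r b \<alpha> \<beta>"
  shows "dual_optimal V w r b S \<alpha> \<beta> \<and> primal_value V w r b S = dual_obj V r b \<alpha> \<beta>"
proof
  show "dual_optimal V w r b S \<alpha> \<beta>"
    using assms(3,5) weak_duality[OF assms(1,2) _ assms(4), of w] unfolding dual_optimal_def by simp
  let ?costs = "{primal_cost V w y' | y'. primal_feasible V r b S y'}"
  have lower: "dual_obj V r b \<alpha> \<beta> \<le> c" if "c \<in> ?costs" for c
    using that weak_duality[OF assms(1-3)] by blast
  have "Inf ?costs = dual_obj V r b \<alpha> \<beta>"
  proof (rule antisym)
    have "primal_cost V w y \<in> ?costs" using assms(4) by blast
    then show "Inf ?costs \<le> dual_obj V r b \<alpha> \<beta>"
      using cInf_lower[OF _ bdd_belowI[of ?costs, OF lower]] assms(5) by simp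
    show "dual_obj V r b \<alpha> \<beta> \<le> Inf ?costs"
      using assms(4) lower by (intro cInf_greatest) auto
  qed
  then show "primal_value V w r b S = dual_obj V r b \<alpha> \<beta>"
    unfolding primal_value_def primal_cost_def .
qed

lemma nonpositive_demand_dual_optimal:
  assumes "finite V" "S \<subseteq> V" "\<forall>v\<in>V. 0 \<le> w v" "\<forall>v\<in>V. 0 \<le> b v" "r \<le> 0"
  shows "dual_optimal V w r b S 0 (\<lambda>_. 0) \<and> primal_value V w r b S = 0"
proof -
  have "dual_optimal V w r b S 0 (\<lambda>_. 0) \<and> primal_value V w r b S = dual_obj V r b 0 (\<lambda>_. 0)"
    using assms by (intro dual_optimal_by_certificate[where y="\<lambda>_. 0"])
      (auto simp: dual_feasible_def primal_feasible_def primal_cost_def dual_obj_def)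
  then show ?thesis by (simp add: dual_obj_def)
qed

definition threshold_dual :: "'a set \<Rightarrow> ('a \<Rightarrow> rat) \<Rightarrow> rat \<Rightarrow> 'a \<Rightarrow> real" where
  "threshold_dual T w t v = (if v \<in> T then real_of_rat (w v - t) else 0)"

definition greedy_fill :: "'a set \<Rightarrow> 'a \<Rightarrow> int \<Rightarrow> ('a \<Rightarrow> int) \<Rightarrow> 'a \<Rightarrow> real" where
  "greedy_fill T p r b v =
     (if v \<in> T then real_of_int (b v) else if v = p then real_of_int (r - sum b T) else 0)"

lemma threshold_dual_feasible:
  assumes "\<forall>v\<in>V. 0 \<le> w v" "T \<subseteq> S" "0 \<le> t"
    and "\<forall>v\<in>T. w v \<le> t" "\<forall>v\<in>S - T. t \<le> w v"
  shows "dual_feasible V w S (real_of_rat t) (threshold_dual T w t)"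
  using assms unfolding dual_feasible_def threshold_dual_def
  by (auto simp: of_rat_diff of_rat_less_eq)

lemma threshold_dual_obj:
  assumes "finite V" "T \<subseteq> V"
  shows "dual_obj V r b (real_of_rat t) (threshold_dual T w t)
           = (\<Sum>v\<in>T. real_of_rat (w v) * real_of_int (b v)) + real_of_rat t * real_of_int (r - sum b T)"
proof -
  have "(\<Sum>v\<in>V. threshold_dual T w t v * real_of_int (b v))
          = (\<Sum>v\<in>T. (real_of_rat (w v) - real_of_rat t) * real_of_int (b v))"
    using assms by (intro sum.mono_neutral_cong_right) (auto simp: threshold_dual_def of_rat_diff)
  then show ?thesis
    unfolding dual_obj_def
    by (simp add: left_diff_distrib sum_subtractf sum_distrib_left right_diff_distrib)
qed

lemma greedy_fill_primal_feasible:
  assumes "finite S" "S \<subseteq> V" "T \<subseteq> S" "p \<in> S - T" "\<forall>v\<in>V. 0 \<le> b v"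
    and "sum b T \<le> r" "r \<le> sum b T + b p"
  shows "primal_feasible V r b S (greedy_fill T p r b)"
proof -
  have "(\<Sum>v\<in>S. greedy_fill T p r b v) = (\<Sum>v\<in>insert p T. greedy_fill T p r b v)"
    using assms(1,3,4) by (intro sum.mono_neutral_right) (auto simp: greedy_fill_def)
  also have "\<dots> = real_of_int r"
    using assms(1,3,4) finite_subset[OF assms(3,1)] by (simp add: greedy_fill_def)
  moreover have "0 \<le> real_of_int (r - sum b T)" "real_of_int (r - sum b T) \<le> real_of_int (b p)"
    using assms(6,7) by (simp_all only: of_int_le_iff of_int_0_le_iff)
  ultimately show ?thesis
    using assms(2-5) unfolding primal_feasible_def greedy_fill_def by auto
qed

lemma greedy_fill_cost:
  assumes "finite V" "T \<subseteq> V" "p \<in> V - T"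
  shows "primal_cost V w (greedy_fill T p r b)
           = (\<Sum>v\<in>T. real_of_rat (w v) * real_of_int (b v)) + real_of_rat (w p) * real_of_int (r - sum b T)"
proof -
  have "primal_cost V w (greedy_fill T p r b) = (\<Sum>v\<in>insert p T. real_of_rat (w v) * greedy_fill T p r b v)"
    unfolding primal_cost_def
    using assms by (intro sum.mono_neutral_right) (auto simp: greedy_fill_def)
  also have "\<dots> = real_of_rat (w p) * real_of_int (r - sum b T)
                   + (\<Sum>v\<in>T. real_of_rat (w v) * real_of_int (b v))"
    using assms finite_subset[OF assms(2,1)] by (simp add: greedy_fill_def)
  finally show ?thesis by simp
qed

lemma threshold_dual_optimal:
  assumes "finite V" "S \<subseteq> V" "\<forall>v\<in>V. 0 \<le> w v" "\<forall>v\<in>V. 0 \<le> b v"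
    and "T \<subseteq> S" "p \<in> S - T" "\<forall>v\<in>T. w v \<le> w p" "\<forall>v\<in>S - T. w p \<le> w v"
    and "sum b T \<le> r" "r \<le> sum b T + b p"
  shows "dual_optimal V w r b S (real_of_rat (w p)) (threshold_dual T w (w p))
         \<and> primal_value V w r b S = dual_obj V r b (real_of_rat (w p)) (threshold_dual T w (w p))"
proof (rule dual_optimal_by_certificate)
  show "dual_feasible V w S (real_of_rat (w p)) (threshold_dual T w (w p))"
    using assms by (intro threshold_dual_feasible) auto
  show "primal_feasible V r b S (greedy_fill T p r b)"
    using assms finite_subset[OF assms(2,1)] by (intro greedy_fill_primal_feasible) auto
  show "primal_cost V w (greedy_fill T p r b) = dual_obj V r b (real_of_rat (w p)) (threshold_dual T w (w p))"
    using assms by (simp add: greedy_fill_cost threshold_dual_obj subset_iff)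
qed (use assms in auto)

lemma threshold_le_dual_obj:
  assumes "finite V" "T \<subseteq> V" "\<forall>v\<in>V. 0 \<le> w v" "\<forall>v\<in>V. 0 \<le> b v" "0 \<le> t" "sum b T < r"
  shows "real_of_rat t \<le> dual_obj V r b (real_of_rat t) (threshold_dual T w t)"
proof -
  have "real_of_rat t * 1 \<le> real_of_rat t * real_of_int (r - sum b T)"
  proof (rule mult_left_mono)
    show "1 \<le> real_of_int (r - sum b T)" using assms(6) by (simp only: of_int_1_le_iff)
  qed (use assms(5) in \<open>simp add: of_rat_less_eq\<close>)
  moreover have "0 \<le> (\<Sum>v\<in>T. real_of_rat (w v) * real_of_int (b v))"
    using assms(2-4) by (intro sum_nonneg) (auto simp: of_rat_less_eq)
  ultimately show ?thesis
    using assms(1,2) by (simp add: threshold_dual_obj)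
qed

lemma sorted_enum_prefix:
  fixes vs :: "nat \<Rightarrow> 'a" and w :: "'a \<Rightarrow> 'b::linorder"
  assumes enum: "bij_betw vs {1..l} S"
    and sorted: "\<forall>i\<in>{1..l}. \<forall>i'\<in>{1..l}. i \<le> i' \<longrightarrow> w (vs i) \<le> w (vs i')"
    and j: "j \<in> {1..l}"
  shows "vs ` {1..j-1} \<subseteq> S" "vs j \<in> S - vs ` {1..j-1}"
    and "\<forall>v\<in>vs ` {1..j-1}. w v \<le> w (vs j)" "\<forall>v\<in>S - vs ` {1..j-1}. w (vs j) \<le> w v"
    and "sum f (vs ` {1..j-1}) = (\<Sum>i\<in>{1..j-1}. f (vs i))"
proof -
  have inj: "inj_on vs {1..l}" and S: "S = vs ` {1..l}"
    using enum by (auto simp: bij_betw_def)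
  have sub: "{1..j-1} \<subseteq> {1..l}" using j by auto
  show "vs ` {1..j-1} \<subseteq> S" using S sub by auto
  show "vs j \<in> S - vs ` {1..j-1}"
    using S j inj_on_image_mem_iff[OF inj _ sub] by auto
  show "\<forall>v\<in>vs ` {1..j-1}. w v \<le> w (vs j)" using sorted sub j by auto
  show "\<forall>v\<in>S - vs ` {1..j-1}. w (vs j) \<le> w v"
  proof
    fix v assume v: "v \<in> S - vs ` {1..j-1}"
    then obtain i where i: "i \<in> {1..l}" "v = vs i" using S by auto
    with v have "\<not> i \<le> j - 1" by auto
    then show "w (vs j) \<le> w v" using sorted i j by auto
  qed
  show "sum f (vs ` {1..j-1}) = (\<Sum>i\<in>{1..j-1}. f (vs i))"
    using sum.reindex[OF inj_on_subset[OF inj sub]] by simp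
qed

lemma prefix_sum_before_first_cover:
  fixes f :: "nat \<Rightarrow> 'a::{comm_monoid_add, linorder}"
  assumes "j \<in> {1..l}" "\<forall>i\<in>{1..l}. r \<le> (\<Sum>i'\<in>{1..i}. f i') \<longrightarrow> j \<le> i" "0 < r"
  shows "(\<Sum>i\<in>{1..j-1}. f i) < r"
proof (cases "j = 1")
  case False
  then have "j - 1 \<in> {1..l}" using assms(1) by auto
  then have "\<not> r \<le> (\<Sum>i\<in>{1..j-1}. f i)" using assms(2) False by fastforce
  then show ?thesis by simp
qed (use assms(3) in simp)

theorem lemma6:
  fixes V S :: "'a set" and C :: rat and d :: "nat \<Rightarrow> 'a \<Rightarrow> rat" and N \<xi> :: nat
    and w :: "'a \<Rightarrow> rat" and b :: "'a \<Rightarrow> int" and vs :: "nat \<Rightarrow> 'a"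
    and l j :: nat and k' :: int
  assumes finV: "finite V" and Cpos: "C > 0"
    and dnn: "\<forall>x\<in>{1..N}. \<forall>v\<in>V. d x v \<ge> 0"
    and wnn: "\<forall>v\<in>V. w v \<ge> 0" and bnn: "\<forall>v\<in>V. b v \<ge> 0"
    and xi: "\<xi> \<in> {1..N}"
    and SV: "S \<subseteq> V" and Sne: "S \<noteq> {}"
    and enum: "bij_betw vs {1..l} S"
    and sorted: "\<forall>i\<in>{1..l}. \<forall>i'\<in>{1..l}. i \<le> i' \<longrightarrow> w (vs i) \<le> w (vs i')"
    and k'pos: "k' > 0"
    and cap: "kxi C d \<xi> S - k' \<le> (\<Sum>v\<in>S. b v)"
    and j: "j \<in> {1..l}" "kxi C d \<xi> S - k' \<le> (\<Sum>i\<in>{1..j}. b (vs i))"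
    and jmin: "\<forall>i\<in>{1..l}. kxi C d \<xi> S - k' \<le> (\<Sum>i'\<in>{1..i}. b (vs i')) \<longrightarrow> j \<le> i"
  shows "dual_optimal V w (kxi C d \<xi> S - k') b S
            (if kxi C d \<xi> S > k' then real_of_rat (w (vs j)) else 0)
            (\<lambda>v. if v \<in> vs ` {1..j-1} then real_of_rat (w v - w (vs j)) else 0)
       \<and> (if kxi C d \<xi> S > k' then real_of_rat (w (vs j)) else 0)
            \<le> primal_value V w (kxi C d \<xi> S - k') b S"
proof -
  define r where "r = kxi C d \<xi> S - k'"
  define T where "T = vs ` {1..j-1}"
  define p where "p = vs j"
  note prefix = sorted_enum_prefix[OF enum sorted j(1), folded T_def p_def]
  have beta_eq: "(\<lambda>v. if v \<in> vs ` {1..j-1} then real_of_rat (w v - w (vs j)) else 0)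
      = threshold_dual T w (w p)"
    unfolding T_def p_def threshold_dual_def ..
  show ?thesis
  proof (cases "k' < kxi C d \<xi> S")
    case True
    have "sum b T < r"
      using prefix_sum_before_first_cover[OF j(1) jmin[folded r_def]] True prefix(5)[of b]
      unfolding r_def by simp
    moreover have "r \<le> sum b T + b p"
      using j(2)[folded r_def] j(1) prefix(5)[of b] sum.cl_ivl_Suc[of "\<lambda>i. b (vs i)" 1 "j - 1"]
      unfolding p_def by simp
    moreover have "T \<subseteq> V" "0 \<le> w p" using prefix(1,2) SV wnn by auto
    ultimately have "dual_optimal V w r b S (real_of_rat (w p)) (threshold_dual T w (w p))
        \<and> real_of_rat (w p) \<le> primal_value V w r b S"
      using threshold_dual_optimal[OF finV SV wnn bnn prefix(1-4)]
        threshold_le_dual_obj[OF finV _ wnn bnn]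
      by auto
    then show ?thesis using True unfolding beta_eq r_def p_def by simp
  next
    case False
    have "vs 1 \<in> V" using bij_betw_apply[OF enum, of 1] j(1) SV by auto
    then have "j \<le> 1" using jmin j(1) False bnn by force
    then have "threshold_dual T w (w p) = (\<lambda>_. 0)"
      unfolding T_def threshold_dual_def by simp
    then show ?thesis
      using False nonpositive_demand_dual_optimal[OF finV SV wnn bnn, of r]
      unfolding beta_eq r_def by simp
  qed
qed

end
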